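(* If $K$ is a compact convex subset of $\mathbb{R}^n$ of dimension $n$, then there exist regular unit normal vectors $u_0, \ldots, u_n$ of $K$, at distinct exposed points $x_0, \ldots, x_n$ of $K$ (with $x_i = K^{u_i}$), such that $u_0, \ldots, u_n$ are the outward unit normal vectors of the facets of some $n$-dimensional simplex in $\mathbb{R}^n$.
   Context: For a unit vector $u$, $K^u=\{x\in K : x\cdot u = h_K(u)\}$ where $h_K(u)=\max_{x\in K}x\cdot u$. A point $x$ is an exposed point of $K$ if $\{x\} = K^u$ for some unit vector $u$; such a direction $u$ is called a regular unit normal to $K$ (at $x$). *)

theory Defs
  imports "HOL-Analysis.Analysis"
begin

definition support_fun :: "'a::euclidean_space set \<Rightarrow> 'a \<Rightarrow> real" where
  "support_fun K u = Sup ((\<lambda>x. x \<bullet> u) ` K)"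

definition support_face :: "'a::euclidean_space set \<Rightarrow> 'a \<Rightarrow> 'a set" where
  "support_face K u = {x \<in> K. x \<bullet> u = support_fun K u}"

definition regular_normal_at :: "'a::euclidean_space set \<Rightarrow> 'a \<Rightarrow> 'a \<Rightarrow> bool" where
  "regular_normal_at K u x \<longleftrightarrow> norm u = 1 \<and> support_face K u = {x}"

definition simplex_facet_normals :: "(nat \<Rightarrow> 'a::euclidean_space) \<Rightarrow> bool" where
  "simplex_facet_normals u \<longleftrightarrow>
     (\<exists>v :: nat \<Rightarrow> 'a.
        inj_on v {..DIM('a)} \<and> \<not> affine_dependent (v ` {..DIM('a)}) \<and>
        (\<forall>i\<le>DIM('a). norm (u i) = 1 \<and>
           support_face (convex hull (v ` {..DIM('a)})) (u i)
             = convex hull (v ` ({..DIM('a)} - {i}))))"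

end

theory Submission
  imports Defs "Jordan_Normal_Form.Determinant"
begin

no_notation scalar_prod (infix "\<bullet>" 70)
no_notation vec_nth (infixl "$" 90)

text \<open>
  Choose vertices \<open>x\<^sub>0, ..., x\<^sub>n\<close> in \<open>K\<close> (\<open>n = DIM('a)\<close>) maximising
  \<open>|det| + \<epsilon> * spread\<close>, where \<open>|det|\<close> is \<open>n!\<close> times the volume of the simplex they span,
  the spread is half the sum of the squared pairwise distances, and \<open>\<epsilon> > 0\<close> is so small that
  the maximiser is affinely independent. Moving only \<open>x\<^sub>i\<close>, the determinant changes affinely and
  the spread by a strictly convex quadratic, so maximality says that the gradient \<open>m\<^sub>i\<close> of the
  objective in \<open>x\<^sub>i\<close> satisfies \<open>m\<^sub>i \<bullet> (y - x\<^sub>i) < 0\<close> for every other \<open>y \<in> K\<close>: it is a regular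
  normal at \<open>x\<^sub>i\<close>. The determinant gradients and the spread gradients each sum to zero, and
  pairing a linear relation among the \<open>m\<^sub>i\<close> with the corresponding combination of the spread
  gradients shows that this is their only relation. Normals with this property are the outward
  facet normals of the simplex whose vertices \<open>v\<^sub>k\<close> satisfy \<open>v\<^sub>k \<bullet> m\<^sub>i = 1\<close> for \<open>i \<noteq> k\<close>.
\<close>

section \<open>Supporting hyperplanes\<close>

lemma support_face_normalize:
  fixes K :: "'a::euclidean_space set"
  assumes "x \<in> K" "\<And>y. y \<in> K \<Longrightarrow> y \<bullet> m \<le> x \<bullet> m" "m \<noteq> 0"
  shows "support_face K (m /\<^sub>R norm m) = {y \<in> K. y \<bullet> m = x \<bullet> m}"
proof -
  have dot: "y \<bullet> (m /\<^sub>R norm m) = y \<bullet> m / norm m" for y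
    by (simp add: divide_inverse_commute)
  have "support_fun K (m /\<^sub>R norm m) = x \<bullet> m / norm m"
    unfolding support_fun_def dot
    by (rule cSup_eq_maximum) (use assms in \<open>auto intro: divide_right_mono\<close>)
  then show ?thesis
    unfolding support_face_def dot using assms(3) by auto
qed

lemma regular_normal_atI:
  fixes K :: "'a::euclidean_space set"
  assumes "x \<in> K" "\<And>y. y \<in> K \<Longrightarrow> y \<noteq> x \<Longrightarrow> y \<bullet> m < x \<bullet> m" "m \<noteq> 0"
  shows "regular_normal_at K (m /\<^sub>R norm m) x"
proof -
  have "support_face K (m /\<^sub>R norm m) = {y \<in> K. y \<bullet> m = x \<bullet> m}"
    using assms by (intro support_face_normalize) (auto simp: order_le_less)
  also have "\<dots> = {x}"
    using assms(1,2) by fastforce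
  finally show ?thesis
    using assms(3) by (simp add: regular_normal_at_def)
qed

lemma convex_hull_insert_inter_hyperplane:
  fixes u :: "'a::euclidean_space"
  assumes "S \<subseteq> {z. z \<bullet> u = c}" "a \<bullet> u \<noteq> c"
  shows "{z \<in> convex hull (insert a S). z \<bullet> u = c} = convex hull S"
proof
  have "convex hull S \<subseteq> {z. z \<bullet> u = c}"
    using assms(1) convex_hyperplane[of u c] by (intro hull_minimal) (auto simp: inner_commute)
  then show "convex hull S \<subseteq> {z \<in> convex hull (insert a S). z \<bullet> u = c}"
    using hull_mono[of S "insert a S"] by auto
  show "{z \<in> convex hull (insert a S). z \<bullet> u = c} \<subseteq> convex hull S"
  proof (cases "S = {}")
    case True
    then show ?thesis
      using assms(2) by auto
  next
    case False
    show ?thesis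
    proof
      fix z assume "z \<in> {z \<in> convex hull (insert a S). z \<bullet> u = c}"
      then have z: "z \<in> convex hull (insert a S)" "z \<bullet> u = c"
        by auto
      then obtain s t y where sty: "0 \<le> s" "0 \<le> t" "s + t = 1" "y \<in> convex hull S"
          "z = s *\<^sub>R a + t *\<^sub>R y"
        using convex_hull_insert[OF False] by auto
      have "y \<bullet> u = c"
        using \<open>convex hull S \<subseteq> {z. z \<bullet> u = c}\<close> sty(4) by auto
      then have "s * (a \<bullet> u) + t * c = c"
        using z(2) sty(5) by (simp add: inner_add_left)
      then have "s * (a \<bullet> u - c) = c - (s + t) * c"
        by (simp add: algebra_simps)
      also have "\<dots> = 0"
        using sty(3) by simp
      finally have "s = 0"
        using assms(2) by simp
      then have "z = y"
        using sty(3,5) by simp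
      then show "z \<in> convex hull S"
        using sty(4) by simp
    qed
  qed
qed

section \<open>Simplices from balanced frames\<close>

text \<open>Equivalently: \<open>m\<^sub>0, ..., m\<^sub>n\<close> sum to zero and any \<open>n\<close> of them are linearly independent.\<close>

definition balanced_frame :: "nat \<Rightarrow> (nat \<Rightarrow> 'a::real_vector) \<Rightarrow> bool" where
  "balanced_frame n m \<longleftrightarrow> (\<Sum>i\<le>n. m i) = 0 \<and>
     (\<forall>\<alpha>. (\<Sum>i\<le>n. \<alpha> i *\<^sub>R m i) = 0 \<longrightarrow> (\<forall>i\<le>n. \<forall>j\<le>n. \<alpha> i = \<alpha> j))"

lemma balanced_frameD:
  assumes "balanced_frame n m"
  shows "(\<Sum>i\<le>n. m i) = 0"
    and "(\<Sum>i\<le>n. \<alpha> i *\<^sub>R m i) = 0 \<Longrightarrow> i \<le> n \<Longrightarrow> j \<le> n \<Longrightarrow> \<alpha> i = \<alpha> j"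
  using assms by (auto simp: balanced_frame_def)

lemma balanced_frame_inj:
  assumes "balanced_frame n m"
  shows "inj_on m {..n}"
proof (rule inj_onI, rule ccontr)
  fix i j assume ij: "i \<in> {..n}" "j \<in> {..n}" "m i = m j" "i \<noteq> j"
  define \<alpha> where "\<alpha> l = (if l = i then 1 else if l = j then -1 else 0::real)" for l
  have "(\<Sum>l\<le>n. \<alpha> l *\<^sub>R m l) = (\<Sum>l\<le>n. (if l = i then m l else 0) - (if l = j then m l else 0))"
    by (rule sum.cong) (use ij(4) in \<open>auto simp: \<alpha>_def\<close>)
  also have "\<dots> = m i - m j"
    using ij(1,2) by (simp add: sum_subtractf)
  also have "\<dots> = 0"
    using ij(3) by simp
  finally have "\<alpha> i = \<alpha> j"
    using balanced_frameD(2)[OF assms] ij by auto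
  then show False
    using ij(4) by (simp add: \<alpha>_def)
qed

lemma balanced_frame_nonzero:
  assumes "balanced_frame n m" "0 < n" "i \<le> n"
  shows "m i \<noteq> 0"
proof
  assume "m i = 0"
  define j where "j = (if i = 0 then 1 else 0::nat)"
  have j: "j \<le> n" "j \<noteq> i"
    using assms(2) by (auto simp: j_def)
  have "(\<Sum>l\<le>n. (if l = i then 1 else 0) *\<^sub>R m l) = m i"
    using assms(3) by (simp add: if_distrib[of "\<lambda>c. c *\<^sub>R _"] cong: if_cong)
  then have "(if i = i then 1 else 0::real) = (if j = i then 1 else 0)"
    using balanced_frameD(2)[OF assms(1), of "\<lambda>l. if l = i then 1 else 0" i j] \<open>m i = 0\<close> assms(3) j(1)
    by simp
  then show False
    using j(2) by simp
qed

lemma balanced_frame_independent: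
  assumes "balanced_frame n m" "k \<le> n"
  shows "independent (m ` ({..n} - {k}))"
proof (rule independent_if_scalars_zero)
  let ?I = "{..n} - {k}"
  show "finite (m ` ?I)" by simp
  fix f v assume f: "(\<Sum>v\<in>m ` ?I. f v *\<^sub>R v) = 0" and v: "v \<in> m ` ?I"
  define \<alpha> where "\<alpha> l = (if l \<in> ?I then f (m l) else 0)" for l
  have inj: "inj_on m ?I"
    using balanced_frame_inj[OF assms(1)] by (rule inj_on_subset) auto
  have "(\<Sum>l\<le>n. \<alpha> l *\<^sub>R m l) = (\<Sum>l\<in>?I. f (m l) *\<^sub>R m l)"
    unfolding \<alpha>_def by (simp add: if_distrib[of "\<lambda>c. c *\<^sub>R _"] sum.If_cases cong: if_cong)
      (rule sum.cong; auto)
  also have "\<dots> = 0"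
    using f by (simp add: sum.reindex[OF inj])
  finally have const: "\<alpha> l = \<alpha> k" if "l \<le> n" for l
    using balanced_frameD(2)[OF assms(1)] assms(2) that by blast
  obtain l where l: "l \<in> ?I" "v = m l"
    using v by blast
  then show "f v = 0"
    using const[of l] by (simp add: \<alpha>_def)
qed

lemma balanced_frame_dual_vertices:
  fixes m :: "nat \<Rightarrow> 'a::euclidean_space"
  assumes "balanced_frame n m"
  shows "\<exists>v. \<forall>k\<le>n. \<forall>i\<le>n. v k \<bullet> m i = (if i = k then - real n else 1)"
proof -
  have "\<forall>k\<in>{..n}. \<exists>v. \<forall>i\<le>n. v \<bullet> m i = (if i = k then - real n else 1)"
  proof
    fix k assume "k \<in> {..n}"
    then have k: "k \<le> n" by simp
    obtain g :: "'a \<Rightarrow> real" where g: "linear g" "\<And>b. b \<in> m ` ({..n} - {k}) \<Longrightarrow> g b = 1"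
      using linear_independent_extend[OF balanced_frame_independent[OF assms k], where f = "\<lambda>_. 1"] by blast
    define v where "v = adjoint g 1"
    have v: "v \<bullet> m i = 1" if "i \<in> {..n} - {k}" for i
    proof -
      have "v \<bullet> m i = g (m i)"
        using adjoint_clauses(2)[OF g(1), of 1 "m i"] by (simp add: v_def)
      then show ?thesis
        using g(2) that by simp
    qed
    have "0 = v \<bullet> (\<Sum>i\<le>n. m i)"
      using balanced_frameD(1)[OF assms] by simp
    also have "\<dots> = v \<bullet> m k + (\<Sum>i\<in>{..n} - {k}. v \<bullet> m i)"
      using k by (simp add: sum.remove inner_add_right inner_sum_right)
    also have "(\<Sum>i\<in>{..n} - {k}. v \<bullet> m i) = real n"
      using k by (simp add: v)
    finally show "\<exists>v. \<forall>i\<le>n. v \<bullet> m i = (if i = k then - real n else 1)"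
      using v by (intro exI[of _ v]) auto
  qed
  then show ?thesis
    by (metis atMost_iff)
qed

lemma dual_vertices_affine_independent:
  fixes v m :: "nat \<Rightarrow> 'a::real_inner"
  assumes vm: "\<And>k i. k \<le> n \<Longrightarrow> i \<le> n \<Longrightarrow> v k \<bullet> m i = (if i = k then - real n else 1)"
  shows "inj_on v {..n}" and "\<not> affine_dependent (v ` {..n})"
proof -
  show inj: "inj_on v {..n}"
  proof (rule inj_onI, rule ccontr)
    fix i j assume ij: "i \<in> {..n}" "j \<in> {..n}" "v i = v j" "i \<noteq> j"
    then show False
      using vm[of i i] vm[of j i] by simp
  qed
  show "\<not> affine_dependent (v ` {..n})"
  proof
    assume "affine_dependent (v ` {..n})"
    then obtain U j where U: "(\<Sum>k\<le>n. U (v k)) = 0" "(\<Sum>k\<le>n. U (v k) *\<^sub>R v k) = 0"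
        and j: "j \<le> n" "U (v j) \<noteq> 0"
      by (auto simp: affine_dependent_explicit_finite sum.reindex[OF inj])
    have "0 = (\<Sum>k\<le>n. U (v k) *\<^sub>R v k) \<bullet> m j"
      using U(2) by simp
    also have "\<dots> = (\<Sum>k\<le>n. U (v k) - (if k = j then (real n + 1) * U (v j) else 0))"
      unfolding inner_sum_left by (rule sum.cong) (auto simp: vm j algebra_simps)
    also have "\<dots> = - ((real n + 1) * U (v j))"
      using j U(1) by (simp add: sum_subtractf)
    finally show False
      using j(2) by simp
  qed
qed

lemma dual_vertices_facet:
  fixes v m :: "nat \<Rightarrow> 'a::euclidean_space"
  assumes vm: "\<And>k i. k \<le> n \<Longrightarrow> i \<le> n \<Longrightarrow> v k \<bullet> m i = (if i = k then - real n else 1)"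
    and "0 < n" "i \<le> n" "m i \<noteq> 0"
  shows "support_face (convex hull (v ` {..n})) (m i /\<^sub>R norm (m i))
           = convex hull (v ` ({..n} - {i}))"
proof -
  let ?V = "v ` {..n}" and ?F = "v ` ({..n} - {i})"
  define j where "j = (if i = 0 then 1 else 0::nat)"
  have j: "j \<le> n" "j \<noteq> i"
    using assms(2) by (auto simp: j_def)
  have V: "?V = insert (v i) ?F"
    using assms(3) by blast
  have below: "convex hull ?V \<subseteq> {z. z \<bullet> m i \<le> 1}"
    using convex_halfspace_le[of "m i" 1] vm assms(3)
    by (intro hull_minimal) (auto simp: inner_commute)
  have "support_face (convex hull ?V) (m i /\<^sub>R norm (m i)) = {z \<in> convex hull ?V. z \<bullet> m i = v j \<bullet> m i}"
  proof (rule support_face_normalize)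
    show "v j \<in> convex hull ?V"
      using j(1) by (simp add: hull_inc)
    show "z \<bullet> m i \<le> v j \<bullet> m i" if "z \<in> convex hull ?V" for z
      using below that vm[OF j(1) assms(3)] j(2) by auto
  qed (rule assms(4))
  also have "\<dots> = {z \<in> convex hull (insert (v i) ?F). z \<bullet> m i = 1}"
    unfolding V using vm[OF j(1) assms(3)] j(2) by simp
  also have "\<dots> = convex hull ?F"
    using assms(3) by (intro convex_hull_insert_inter_hyperplane) (auto simp: vm)
  finally show ?thesis .
qed

lemma simplex_facet_normals_if_balanced_frame:
  fixes m :: "nat \<Rightarrow> 'a::euclidean_space"
  assumes "balanced_frame DIM('a) m"
  shows "simplex_facet_normals (\<lambda>i. m i /\<^sub>R norm (m i))"
proof -
  obtain v where vm: "\<And>k i. k \<le> DIM('a) \<Longrightarrow> i \<le> DIM('a) \<Longrightarrow>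
      v k \<bullet> m i = (if i = k then - real DIM('a) else 1)"
    using balanced_frame_dual_vertices[OF assms] by blast
  have m0: "m i \<noteq> 0" if "i \<le> DIM('a)" for i
    using balanced_frame_nonzero[OF assms DIM_positive that] .
  show ?thesis
    unfolding simplex_facet_normals_def
    using dual_vertices_affine_independent[OF vm] dual_vertices_facet[OF vm DIM_positive _ m0] m0
    by (intro exI[of _ v] conjI allI impI) simp_all
qed

section \<open>The vertex determinant\<close>

definition basis_enum :: "nat \<Rightarrow> 'a::euclidean_space" where
  "basis_enum = (SOME b. bij_betw b {..<DIM('a)} Basis)"

lemma bij_betw_basis_enum: "bij_betw basis_enum {..<DIM('a)} (Basis :: 'a::euclidean_space set)"
  unfolding basis_enum_def
  using someI_ex[of "\<lambda>b. bij_betw b {..<DIM('a)} (Basis :: 'a set)"] ex_bij_betw_nat_finite[of "Basis :: 'a set"]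
  by (simp add: atLeast0LessThan)

lemma inner_basis_enum:
  assumes "j < DIM('a)" "k < DIM('a)"
  shows "(basis_enum j :: 'a::euclidean_space) \<bullet> basis_enum k = (if j = k then 1 else 0)"
proof -
  have "basis_enum j \<in> (Basis :: 'a set)" "basis_enum k \<in> (Basis :: 'a set)"
    using bij_betw_apply[OF bij_betw_basis_enum] assms by auto
  moreover have "basis_enum j = (basis_enum k :: 'a) \<longleftrightarrow> j = k"
    using bij_betw_imp_inj_on[OF bij_betw_basis_enum[where 'a = 'a]] assms by (auto dest: inj_onD)
  ultimately show ?thesis
    by (simp add: inner_Basis)
qed

lemma inner_eq_sum_basis_enum:
  fixes x y :: "'a::euclidean_space"
  shows "x \<bullet> y = (\<Sum>k<DIM('a). (x \<bullet> basis_enum k) * (y \<bullet> basis_enum k))"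
  using euclidean_inner[of x y] sum.reindex_bij_betw[OF bij_betw_basis_enum, of "\<lambda>e. (x \<bullet> e) * (y \<bullet> e)"]
  by simp

text \<open>Row \<open>r\<close> is \<open>1\<close> followed by the coordinates of \<open>x r\<close>, so \<open>|vertex_det x|\<close> is
  \<open>DIM('a)!\<close> times the volume of the simplex with vertices \<open>x 0, ..., x DIM('a)\<close>.\<close>

definition vertex_matrix :: "(nat \<Rightarrow> 'a::euclidean_space) \<Rightarrow> real mat" where
  "vertex_matrix x = mat (Suc DIM('a)) (Suc DIM('a))
     (\<lambda>(r, c). if c = 0 then 1 else x r \<bullet> basis_enum (c - 1))"

definition vertex_det :: "(nat \<Rightarrow> 'a::euclidean_space) \<Rightarrow> real" where
  "vertex_det x = det (vertex_matrix x)"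

lemma vertex_matrix_carrier [simp]:
  "vertex_matrix (x :: nat \<Rightarrow> 'a::euclidean_space) \<in> carrier_mat (Suc DIM('a)) (Suc DIM('a))"
  by (simp add: vertex_matrix_def)

lemma vertex_det_eq_rows:
  fixes x :: "nat \<Rightarrow> 'a::euclidean_space"
  assumes "i \<le> DIM('a)" "k \<le> DIM('a)" "i \<noteq> k" "x i = x k"
  shows "vertex_det x = 0"
  unfolding vertex_det_def
  by (rule det_identical_rows[OF vertex_matrix_carrier, of i k])
     (use assms in \<open>auto simp: vertex_matrix_def\<close>)

lemma inj_on_if_vertex_det_nonzero:
  fixes x :: "nat \<Rightarrow> 'a::euclidean_space"
  assumes "vertex_det x \<noteq> 0"
  shows "inj_on x {..DIM('a)}"
proof (rule inj_onI, rule ccontr)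
  fix i j assume "i \<in> {..DIM('a)}" "j \<in> {..DIM('a)}" "x i = x j" "i \<noteq> j"
  then show False
    using assms vertex_det_eq_rows[of i j x] by simp
qed

lemma continuous_on_vertex_det: "continuous_on UNIV (vertex_det :: (nat \<Rightarrow> 'a::euclidean_space) \<Rightarrow> real)"
proof -
  let ?N = "Suc DIM('a)"
  have entry: "continuous_on UNIV (\<lambda>x :: nat \<Rightarrow> 'a. vertex_matrix x $$ (r, c))"
    if "r < ?N" "c < ?N" for r c
    using that continuous_on_inner[OF continuous_on_product_coordinates continuous_on_const]
    by (cases "c = 0") (simp_all add: vertex_matrix_def)
  have "continuous_on UNIV (\<lambda>x :: nat \<Rightarrow> 'a. \<Sum>p\<in>{p. p permutes {0..<?N}}.
      signof p * (\<Prod>r = 0..<?N. vertex_matrix x $$ (r, p r)))"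
    by (intro continuous_intros entry) (auto dest: permutes_in_image)
  then show ?thesis
    by (simp only: vertex_det_def[abs_def] det_def'[OF vertex_matrix_carrier])
qed

lemma vertex_det_affine_in_row:
  fixes x :: "nat \<Rightarrow> 'a::euclidean_space"
  assumes "i \<le> DIM('a)"
  shows "\<exists>W. \<forall>y. vertex_det (x(i := y)) = vertex_det x + W \<bullet> (y - x i)"
proof -
  let ?N = "Suc DIM('a)" and ?A = "\<lambda>y. vertex_matrix (x(i := y))"
  define cof where "cof c = cofactor (vertex_matrix x) i c" for c
  define W :: 'a where "W = (\<Sum>c<DIM('a). cof (Suc c) *\<^sub>R basis_enum c)"
  have cof: "cofactor (?A y) i c = cof c" for y c
    unfolding cof_def cofactor_def mat_delete_def
    by (intro arg_cong[where f = "\<lambda>M. _ * det M"] eq_matI) (auto simp: vertex_matrix_def)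
  have expand: "vertex_det (x(i := y)) = cof 0 + W \<bullet> y" for y
  proof -
    have "vertex_det (x(i := y)) = (\<Sum>c<?N. ?A y $$ (i, c) * cofactor (?A y) i c)"
      unfolding vertex_det_def using assms by (intro laplace_expansion_row) auto
    also have "\<dots> = (\<Sum>c<?N. ?A y $$ (i, c) * cof c)"
      by (simp only: cof)
    also have "\<dots> = cof 0 + (\<Sum>c<DIM('a). (y \<bullet> basis_enum c) * cof (Suc c))"
      unfolding sum.lessThan_Suc_shift using assms by (auto simp: vertex_matrix_def intro!: sum.cong)
    also have "\<dots> = cof 0 + W \<bullet> y"
      unfolding W_def inner_sum_left by (simp add: inner_commute mult.commute)
    finally show ?thesis .
  qed
  show ?thesis
    using expand[of "x i"] expand by (intro exI[of _ W]) (simp add: inner_diff_right)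
qed

text \<open>The coefficients of the affine functional \<open>\<lambda>y. y \<bullet> z - c\<close> against the columns of
  \<open>vertex_matrix\<close>.\<close>

definition hyperplane_vec :: "'a::euclidean_space \<Rightarrow> real \<Rightarrow> real vec" where
  "hyperplane_vec z c = vec (Suc DIM('a)) (\<lambda>k. if k = 0 then - c else z \<bullet> basis_enum (k - 1))"

lemma hyperplane_vec_carrier: "hyperplane_vec (z :: 'a::euclidean_space) c \<in> carrier_vec (Suc DIM('a))"
  by (simp add: hyperplane_vec_def)

lemma vertex_matrix_mult_hyperplane_vec:
  fixes x :: "nat \<Rightarrow> 'a::euclidean_space"
  assumes "r \<le> DIM('a)"
  shows "(vertex_matrix x *\<^sub>v hyperplane_vec z c) $ r = x r \<bullet> z - c"
proof -
  have "(vertex_matrix x *\<^sub>v hyperplane_vec z c) $ r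
      = (\<Sum>k<Suc DIM('a). vertex_matrix x $$ (r, k) * hyperplane_vec z c $ k)"
    using assms by (simp add: vertex_matrix_def hyperplane_vec_def scalar_prod_def atLeast0LessThan)
  also have "\<dots> = - c + (\<Sum>k<DIM('a). (x r \<bullet> basis_enum k) * (z \<bullet> basis_enum k))"
    unfolding sum.lessThan_Suc_shift using assms
    by (auto simp: vertex_matrix_def hyperplane_vec_def intro!: sum.cong)
  also have "\<dots> = x r \<bullet> z - c"
    by (simp add: inner_eq_sum_basis_enum[of "x r" z])
  finally show ?thesis .
qed

lemma hyperplane_vec_eq_0_iff:
  "hyperplane_vec (z :: 'a::euclidean_space) c = 0\<^sub>v (Suc DIM('a)) \<longleftrightarrow> z = 0 \<and> c = 0"
proof
  assume *: "hyperplane_vec z c = 0\<^sub>v (Suc DIM('a))"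
  have "z \<bullet> basis_enum k = 0" if "k < DIM('a)" for k
    using arg_cong[OF *, of "\<lambda>v. v $ Suc k"] that by (simp add: hyperplane_vec_def)
  then have "z \<bullet> z = 0"
    by (simp add: inner_eq_sum_basis_enum[of z z])
  then show "z = 0 \<and> c = 0"
    using arg_cong[OF *, of "\<lambda>v. v $ 0"] by (simp add: hyperplane_vec_def)
qed (auto simp: hyperplane_vec_def)

lemma hyperplane_vec_surj:
  assumes "v \<in> carrier_vec (Suc DIM('a))"
  shows "\<exists>(z :: 'a::euclidean_space) c. v = hyperplane_vec z c"
proof (intro exI)
  let ?z = "(\<Sum>j<DIM('a). v $ Suc j *\<^sub>R basis_enum j) :: 'a"
  have "?z \<bullet> basis_enum k = v $ Suc k" if "k < DIM('a)" for k
    using that by (simp add: inner_sum_left inner_basis_enum if_distrib cong: if_cong)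
  then show "v = hyperplane_vec ?z (- v $ 0)"
    using assms by (intro eq_vecI) (auto simp: hyperplane_vec_def less_Suc_eq_0_disj)
qed

lemma vertex_det_eq_0_iff:
  fixes x :: "nat \<Rightarrow> 'a::euclidean_space"
  shows "vertex_det x = 0 \<longleftrightarrow> (\<exists>z c. z \<noteq> 0 \<and> (\<forall>r\<le>DIM('a). x r \<bullet> z = c))"
proof -
  let ?N = "Suc DIM('a)" and ?M = "vertex_matrix x"
  have kernel: "?M *\<^sub>v hyperplane_vec z c = 0\<^sub>v ?N \<longleftrightarrow> (\<forall>r\<le>DIM('a). x r \<bullet> z = c)" for z c
    by (auto simp: vec_eq_iff vertex_matrix_mult_hyperplane_vec less_Suc_eq_le)
      (simp add: vertex_matrix_def)
  have "vertex_det x = 0 \<longleftrightarrow> (\<exists>v. v \<in> carrier_vec ?N \<and> v \<noteq> 0\<^sub>v ?N \<and> ?M *\<^sub>v v = 0\<^sub>v ?N)"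
    unfolding vertex_det_def by (rule det_0_iff_vec_prod_zero[OF vertex_matrix_carrier])
  also have "\<dots> \<longleftrightarrow> (\<exists>(z :: 'a) c. hyperplane_vec z c \<noteq> 0\<^sub>v ?N \<and> ?M *\<^sub>v hyperplane_vec z c = 0\<^sub>v ?N)"
  proof
    assume "\<exists>v. v \<in> carrier_vec ?N \<and> v \<noteq> 0\<^sub>v ?N \<and> ?M *\<^sub>v v = 0\<^sub>v ?N"
    then obtain v where v: "v \<in> carrier_vec ?N" "v \<noteq> 0\<^sub>v ?N" "?M *\<^sub>v v = 0\<^sub>v ?N"
      by blast
    moreover obtain z :: 'a and c where "v = hyperplane_vec z c"
      using hyperplane_vec_surj[OF v(1)] by blast
    ultimately show "\<exists>(z :: 'a) c. hyperplane_vec z c \<noteq> 0\<^sub>v ?N \<and> ?M *\<^sub>v hyperplane_vec z c = 0\<^sub>v ?N"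
      by blast
  qed (use hyperplane_vec_carrier in blast)
  also have "\<dots> \<longleftrightarrow> (\<exists>z c. (z \<noteq> 0 \<or> c \<noteq> 0) \<and> (\<forall>r\<le>DIM('a). x r \<bullet> z = c))"
    by (simp add: kernel hyperplane_vec_eq_0_iff)
  also have "\<dots> \<longleftrightarrow> (\<exists>z c. z \<noteq> 0 \<and> (\<forall>r\<le>DIM('a). x r \<bullet> z = c))"
    by (metis inner_zero_right le0)
  finally show ?thesis .
qed

section \<open>Spread of a configuration\<close>

definition spread :: "nat \<Rightarrow> (nat \<Rightarrow> 'a::real_inner) \<Rightarrow> real" where
  "spread n x = real (Suc n) * (\<Sum>j\<le>n. (norm (x j))\<^sup>2) - (norm (\<Sum>j\<le>n. x j))\<^sup>2"

lemma spread_eq_pairwise: "2 * spread n x = (\<Sum>j\<le>n. \<Sum>l\<le>n. (norm (x j - x l))\<^sup>2)"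
proof -
  have "(norm (x j - x l))\<^sup>2 = (norm (x j))\<^sup>2 + (norm (x l))\<^sup>2 - 2 * (x j \<bullet> x l)" for j l
    by (simp add: power2_norm_eq_inner inner_diff_left inner_diff_right inner_commute)
  then show ?thesis
    by (simp add: spread_def sum.distrib sum_subtractf sum_distrib_left power2_norm_eq_inner
        inner_sum_left inner_sum_right algebra_simps)
qed

lemma spread_nonneg: "0 \<le> spread n x"
proof -
  have "0 \<le> (\<Sum>j\<le>n. \<Sum>l\<le>n. (norm (x j - x l))\<^sup>2)"
    by (intro sum_nonneg) simp
  then show ?thesis
    using spread_eq_pairwise[of n x] by simp
qed

lemma spread_eq_0_imp_eq:
  assumes "spread n x = 0" "j \<le> n" "l \<le> n"
  shows "x j = x l"
proof -
  have nonneg: "0 \<le> (\<Sum>l\<le>n. (norm (x j - x l))\<^sup>2)" for j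
    by (intro sum_nonneg) simp
  have "(\<Sum>j\<le>n. \<Sum>l\<le>n. (norm (x j - x l))\<^sup>2) = 0"
    using spread_eq_pairwise[of n x] assms(1) by simp
  then have "(\<Sum>l\<le>n. (norm (x j - x l))\<^sup>2) = 0"
    using sum_nonneg_eq_0_iff[OF finite_atMost, of n "\<lambda>j. \<Sum>l\<le>n. (norm (x j - x l))\<^sup>2"] nonneg assms(2)
    by simp
  then have "(norm (x j - x l))\<^sup>2 = 0"
    using sum_nonneg_eq_0_iff[OF finite_atMost, of n "\<lambda>l. (norm (x j - x l))\<^sup>2"] assms(3) by simp
  then show ?thesis
    by simp
qed

lemma sum_fun_upd:
  fixes f :: "'b \<Rightarrow> 'c::ab_group_add"
  assumes "finite A" "i \<in> A"
  shows "(\<Sum>j\<in>A. f ((x(i := y)) j)) = (\<Sum>j\<in>A. f (x j)) - f (x i) + f y"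
proof -
  have "(\<Sum>j\<in>A. f ((x(i := y)) j)) = f ((x(i := y)) i) + (\<Sum>j\<in>A - {i}. f ((x(i := y)) j))"
    by (rule sum.remove[OF assms])
  also have "(\<Sum>j\<in>A - {i}. f ((x(i := y)) j)) = (\<Sum>j\<in>A - {i}. f (x j))"
    by (rule sum.cong) auto
  also have "\<dots> = (\<Sum>j\<in>A. f (x j)) - f (x i)"
    using assms by (simp add: sum_diff1)
  finally show ?thesis
    by (simp add: algebra_simps)
qed

lemma spread_fun_upd:
  fixes x :: "nat \<Rightarrow> 'a::real_inner"
  assumes "i \<le> n"
  shows "spread n (x(i := y)) = spread n x
           + 2 * ((real (Suc n) *\<^sub>R x i - (\<Sum>j\<le>n. x j)) \<bullet> (y - x i))
           + real n * (norm (y - x i))\<^sup>2"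
proof -
  define S where "S = (\<Sum>j\<le>n. x j)"
  define d where "d = y - x i"
  have i: "i \<in> {..n}"
    using assms by simp
  have sq: "(norm (u + v))\<^sup>2 = (norm u)\<^sup>2 + 2 * (u \<bullet> v) + (norm v)\<^sup>2" for u v :: 'a
    by (simp add: power2_norm_eq_inner inner_add_left inner_add_right inner_commute)
  have y: "y = x i + d" "S - x i + y = S + d"
    by (simp_all add: d_def)
  have "spread n (x(i := y)) - spread n x
      = real (Suc n) * (2 * (x i \<bullet> d) + (norm d)\<^sup>2) - (2 * (S \<bullet> d) + (norm d)\<^sup>2)"
    unfolding spread_def sum_fun_upd[OF finite_atMost i, of "\<lambda>v. (norm v)\<^sup>2" x y]
      sum_fun_upd[OF finite_atMost i, of "\<lambda>v. v" x y] S_def[symmetric] y(2)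
    unfolding y(1) sq by (simp add: algebra_simps)
  also have "\<dots> = 2 * ((real (Suc n) *\<^sub>R x i - S) \<bullet> d) + real n * (norm d)\<^sup>2"
    by (simp add: algebra_simps)
  finally show ?thesis
    by (simp add: S_def d_def)
qed

lemma continuous_on_spread: "continuous_on UNIV (spread n :: (nat \<Rightarrow> 'a::real_inner) \<Rightarrow> real)"
  unfolding spread_def[abs_def]
  by (intro continuous_intros continuous_on_product_coordinates)

lemma sum_scaleR_centered:
  fixes x :: "nat \<Rightarrow> 'a::real_vector"
  shows "(\<Sum>i\<le>n. \<alpha> i *\<^sub>R (real (Suc n) *\<^sub>R x i - (\<Sum>j\<le>n. x j)))
           = (\<Sum>i\<le>n. (real (Suc n) * \<alpha> i - (\<Sum>l\<le>n. \<alpha> l)) *\<^sub>R x i)"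
proof -
  have "(\<Sum>i\<le>n. \<alpha> i *\<^sub>R (real (Suc n) *\<^sub>R x i - (\<Sum>j\<le>n. x j)))
      = (\<Sum>i\<le>n. (real (Suc n) * \<alpha> i) *\<^sub>R x i) - (\<Sum>l\<le>n. \<alpha> l) *\<^sub>R (\<Sum>j\<le>n. x j)"
    unfolding scaleR_diff_right sum_subtractf scaleR_sum_left by (simp add: mult.commute)
  also have "\<dots> = (\<Sum>i\<le>n. (real (Suc n) * \<alpha> i - (\<Sum>l\<le>n. \<alpha> l)) *\<^sub>R x i)"
    unfolding scaleR_left_diff_distrib sum_subtractf scaleR_sum_right ..
  finally show ?thesis .
qed

lemma sum_mult_centered_eq_spread:
  fixes \<alpha> :: "nat \<Rightarrow> real"
  shows "(\<Sum>i\<le>n. \<alpha> i * (real (Suc n) * \<alpha> i - (\<Sum>l\<le>n. \<alpha> l))) = spread n \<alpha>"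
proof -
  define T where "T = (\<Sum>l\<le>n. \<alpha> l)"
  have "(\<Sum>i\<le>n. \<alpha> i * (real (Suc n) * \<alpha> i - T)) = real (Suc n) * (\<Sum>i\<le>n. (\<alpha> i)\<^sup>2) - T\<^sup>2"
    unfolding right_diff_distrib sum_subtractf sum_distrib_left power2_eq_square
    unfolding T_def sum_distrib_right by (simp add: mult.left_commute)
  then show ?thesis
    by (simp add: spread_def T_def)
qed

lemma inner_sum_centered_eq_spread:
  fixes x w :: "nat \<Rightarrow> 'a::real_inner"
  assumes wx: "\<And>i j. i \<le> n \<Longrightarrow> j \<le> n \<Longrightarrow> w i \<bullet> (x j - x i) = (if j = i then 0 else - \<Delta>)"
  shows "(\<Sum>i\<le>n. \<alpha> i *\<^sub>R w i) \<bullet> (\<Sum>j\<le>n. (real (Suc n) * \<alpha> j - (\<Sum>l\<le>n. \<alpha> l)) *\<^sub>R x j)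
           = \<Delta> * spread n \<alpha>"
proof -
  define \<beta> where "\<beta> j = real (Suc n) * \<alpha> j - (\<Sum>l\<le>n. \<alpha> l)" for j
  have \<beta>_sum: "(\<Sum>j\<le>n. \<beta> j) = 0"
    by (simp add: \<beta>_def sum_subtractf sum_distrib_left)
  have "w i \<bullet> (\<Sum>j\<le>n. \<beta> j *\<^sub>R x j) = \<Delta> * \<beta> i" if "i \<le> n" for i
  proof -
    have "w i \<bullet> (\<Sum>j\<le>n. \<beta> j *\<^sub>R x j) = (\<Sum>j\<le>n. \<beta> j * (w i \<bullet> (x j - x i)))"
      using \<beta>_sum by (simp add: inner_sum_right inner_diff_right right_diff_distrib sum_subtractf
          flip: sum_distrib_right)
    also have "\<dots> = (\<Sum>j\<le>n. \<beta> j * (- \<Delta>)) - \<beta> i * (- \<Delta>)"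
      using that by (simp add: wx if_distrib sum.If_cases sum_diff1 Diff_eq[symmetric])
    finally show ?thesis
      using \<beta>_sum by (simp add: sum_negf flip: sum_distrib_right)
  qed
  then have "(\<Sum>i\<le>n. \<alpha> i *\<^sub>R w i) \<bullet> (\<Sum>j\<le>n. \<beta> j *\<^sub>R x j) = \<Delta> * (\<Sum>i\<le>n. \<alpha> i * \<beta> i)"
    by (simp add: inner_sum_left sum_distrib_left mult.left_commute)
  then show ?thesis
    unfolding \<beta>_def sum_mult_centered_eq_spread .
qed

lemma balanced_frame_perturb:
  fixes x w :: "nat \<Rightarrow> 'a::real_inner"
  assumes wx: "\<And>i j. i \<le> n \<Longrightarrow> j \<le> n \<Longrightarrow> w i \<bullet> (x j - x i) = (if j = i then 0 else - \<Delta>)"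
    and "0 < \<Delta>" "0 \<le> \<epsilon>" "(\<Sum>i\<le>n. w i) = 0"
  shows "balanced_frame n (\<lambda>i. w i + \<epsilon> *\<^sub>R (real (Suc n) *\<^sub>R x i - (\<Sum>j\<le>n. x j)))"
proof -
  let ?s = "\<lambda>i. real (Suc n) *\<^sub>R x i - (\<Sum>j\<le>n. x j)"
  have "(\<Sum>i\<le>n. w i + \<epsilon> *\<^sub>R ?s i) = 0"
    using assms(4) by (simp add: sum.distrib scaleR_sum_right[symmetric] sum_subtractf sum_constant_scaleR)
  moreover have "\<alpha> i = \<alpha> j"
    if rel: "(\<Sum>i\<le>n. \<alpha> i *\<^sub>R (w i + \<epsilon> *\<^sub>R ?s i)) = 0" and ij: "i \<le> n" "j \<le> n" for \<alpha> i j
  proof -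
    define E where "E = (\<Sum>j\<le>n. (real (Suc n) * \<alpha> j - (\<Sum>l\<le>n. \<alpha> l)) *\<^sub>R x j)"
    have "(\<Sum>i\<le>n. \<alpha> i *\<^sub>R w i) + \<epsilon> *\<^sub>R (\<Sum>i\<le>n. \<alpha> i *\<^sub>R ?s i) = 0"
      using rel by (simp only: scaleR_add_right sum.distrib scaleR_sum_right scaleR_left_commute)
    then have "(\<Sum>i\<le>n. \<alpha> i *\<^sub>R w i) + \<epsilon> *\<^sub>R E = 0"
      by (simp only: E_def sum_scaleR_centered)
    \<comment> \<open>Pairing with \<open>E\<close>: the first part contributes \<open>\<Delta> * spread n \<alpha>\<close>, the second \<open>\<epsilon> * |E|\<^sup>2\<close>.\<close>
    from arg_cong[OF this, of "\<lambda>v. v \<bullet> E"]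
    have "\<Delta> * spread n \<alpha> + \<epsilon> * (E \<bullet> E) = 0"
      using inner_sum_centered_eq_spread[OF wx] by (simp add: inner_add_left E_def)
    moreover have "0 \<le> \<epsilon> * (E \<bullet> E)"
      using assms(3) by simp
    ultimately have "spread n \<alpha> = 0"
      using assms(2) spread_nonneg[of n \<alpha>] by (smt (verit) mult_pos_pos)
    then show ?thesis
      using spread_eq_0_imp_eq ij by blast
  qed
  ultimately show ?thesis
    by (simp add: balanced_frame_def)
qed

section \<open>Extremal configurations\<close>

lemma aff_dim_not_subset_hyperplane:
  fixes S :: "'a::euclidean_space set"
  assumes "aff_dim S = int DIM('a)" "z \<noteq> 0"
  shows "\<not> S \<subseteq> {y. z \<bullet> y = c}"
proof
  assume "S \<subseteq> {y. z \<bullet> y = c}"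
  then have "aff_dim S \<le> aff_dim {y. z \<bullet> y = c}"
    by (rule aff_dim_subset)
  also have "\<dots> = int (DIM('a) - 1)"
    by (rule aff_dim_hyperplane[OF assms(2)])
  finally show False
    using assms(1) DIM_positive[where 'a = 'a] by linarith
qed

lemma ex_vertex_det_nonzero:
  fixes K :: "'a::euclidean_space set"
  assumes "aff_dim K = int DIM('a)"
  shows "\<exists>p. (\<forall>i. p i \<in> K) \<and> vertex_det p \<noteq> 0"
proof -
  obtain B where B: "B \<subseteq> K" "\<not> affine_dependent B" "affine hull K = affine hull B"
    using affine_basis_exists[of K] by blast
  have aff_B: "aff_dim B = int DIM('a)"
    using aff_dim_affine_hull[of B] aff_dim_affine_hull[of K] B(3) assms by simp
  then have "{..<card B} = {..DIM('a)}"
    using aff_dim_affine_independent[OF B(2)] by (simp add: lessThan_Suc_atMost[symmetric])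
  then obtain q where q: "bij_betw q {..DIM('a)} B"
    using ex_bij_betw_nat_finite[OF aff_independent_finite[OF B(2)]] by (auto simp: atLeast0LessThan)
  obtain k where k: "k \<in> K"
    using assms aff_dim_empty[of K] by fastforce
  define p where "p i = (if i \<le> DIM('a) then q i else k)" for i
  have pK: "p i \<in> K" for i
    using bij_betw_apply[OF q] B(1) k by (auto simp: p_def)
  have "vertex_det p \<noteq> 0"
  proof
    assume "vertex_det p = 0"
    then obtain z c where zc: "z \<noteq> 0" "\<And>r. r \<le> DIM('a) \<Longrightarrow> p r \<bullet> z = c"
      unfolding vertex_det_eq_0_iff by blast
    have "B \<subseteq> {y. z \<bullet> y = c}"
    proof
      fix y assume "y \<in> B"
      then obtain r where "r \<le> DIM('a)" "y = q r"
        using bij_betw_imp_surj_on[OF q] by force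
      then show "y \<in> {y. z \<bullet> y = c}"
        using zc(2)[of r] by (simp add: p_def inner_commute)
    qed
    then show False
      using aff_dim_not_subset_hyperplane[OF aff_B zc(1)] by blast
  qed
  then show ?thesis
    using pK by blast
qed

lemma vertex_det_gradients:
  fixes x :: "nat \<Rightarrow> 'a::euclidean_space"
  obtains W where "\<And>i y. i \<le> DIM('a) \<Longrightarrow> vertex_det (x(i := y)) = vertex_det x + W i \<bullet> (y - x i)"
    and "\<And>i j. i \<le> DIM('a) \<Longrightarrow> j \<le> DIM('a) \<Longrightarrow>
           W i \<bullet> (x j - x i) = (if j = i then 0 else - vertex_det x)"
proof -
  have "\<exists>W. (\<forall>y. vertex_det (x(i := y)) = vertex_det x + W \<bullet> (y - x i)) \<and>
      (\<forall>j\<le>DIM('a). W \<bullet> (x j - x i) = (if j = i then 0 else - vertex_det x))" if i: "i \<le> DIM('a)" for i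
  proof -
    obtain W where W: "\<And>y. vertex_det (x(i := y)) = vertex_det x + W \<bullet> (y - x i)"
      using vertex_det_affine_in_row[OF i] by blast
    have "W \<bullet> (x j - x i) = - vertex_det x" if "j \<le> DIM('a)" "j \<noteq> i" for j
    proof -
      have "vertex_det (x(i := x j)) = 0"
        using i that by (intro vertex_det_eq_rows[of i j]) auto
      then show ?thesis
        using W[of "x j"] by simp
    qed
    then show ?thesis
      using W by auto
  qed
  then have "\<forall>i\<in>{..DIM('a)}. \<exists>W. (\<forall>y. vertex_det (x(i := y)) = vertex_det x + W \<bullet> (y - x i)) \<and>
      (\<forall>j\<le>DIM('a). W \<bullet> (x j - x i) = (if j = i then 0 else - vertex_det x))"
    by blast
  from bchoice[OF this] show ?thesis
    using that by auto
qed

lemma sum_vertex_det_gradients: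
  fixes x W :: "nat \<Rightarrow> 'a::euclidean_space"
  assumes "vertex_det x \<noteq> 0"
    and W: "\<And>i j. i \<le> DIM('a) \<Longrightarrow> j \<le> DIM('a) \<Longrightarrow> W i \<bullet> (x j - x i) = (if j = i then 0 else c)"
  shows "(\<Sum>i\<le>DIM('a). W i) = 0"
proof -
  let ?n = "DIM('a)"
  have "x r \<bullet> (\<Sum>i\<le>?n. W i) = (\<Sum>i\<le>?n. W i \<bullet> x i) + real ?n * c" if "r \<le> ?n" for r
  proof -
    have "x r \<bullet> (\<Sum>i\<le>?n. W i) = (\<Sum>i\<le>?n. W i \<bullet> x i + W i \<bullet> (x r - x i))"
      by (simp add: inner_sum_right inner_commute inner_diff_right)
    also have "\<dots> = (\<Sum>i\<le>?n. W i \<bullet> x i) + (\<Sum>i\<le>?n. if r = i then 0 else c)"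
      using that W by (simp add: sum.distrib)
    also have "(\<Sum>i\<le>?n. if r = i then 0 else c) = (\<Sum>i\<in>{..?n} - {r}. if r = i then 0 else c)"
      using that by (simp add: sum.remove[of "{..?n}" r])
    also have "\<dots> = (\<Sum>i\<in>{..?n} - {r}. c)"
      by (rule sum.cong) auto
    finally show ?thesis
      using that by simp
  qed
  then show ?thesis
    using assms(1) vertex_det_eq_0_iff[of x] by blast
qed

lemma compact_sequences_in:
  fixes K :: "'a::topological_space set"
  assumes "compact K"
  shows "compact {x :: nat \<Rightarrow> 'a. \<forall>i. x i \<in> K}"
proof -
  have "{x :: nat \<Rightarrow> 'a. \<forall>i. x i \<in> K} = (\<Pi>\<^sub>E i\<in>UNIV. K)"
    by (auto simp: PiE_UNIV_domain Pi_iff)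
  then show ?thesis
    using compactin_PiE[of "\<lambda>_::nat. euclidean" UNIV "\<lambda>_. K"] assms
    by (simp add: euclidean_product_topology)
qed

lemma exists_maximal_vertices:
  fixes K :: "'a::euclidean_space set"
  assumes "compact K" "aff_dim K = int DIM('a)"
  obtains \<epsilon> x where "0 < \<epsilon>" "\<And>i. x i \<in> K" "vertex_det x \<noteq> 0"
    "\<And>y. (\<And>i. y i \<in> K) \<Longrightarrow>
       \<bar>vertex_det y\<bar> + \<epsilon> * spread DIM('a) y \<le> \<bar>vertex_det x\<bar> + \<epsilon> * spread DIM('a) x"
proof -
  let ?Q = "spread DIM('a) :: (nat \<Rightarrow> 'a) \<Rightarrow> real"
  obtain p where pK: "\<And>i. p i \<in> K" and p: "vertex_det p \<noteq> 0"
    using ex_vertex_det_nonzero[OF assms(2)] by blast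
  define X where "X = {y :: nat \<Rightarrow> 'a. \<forall>i. y i \<in> K}"
  have X: "y \<in> X \<longleftrightarrow> (\<forall>i. y i \<in> K)" for y
    by (simp add: X_def)
  have "compact X"
    unfolding X_def using assms(1) by (rule compact_sequences_in)
  moreover have "p \<in> X"
    using pK X by simp
  ultimately obtain b where "b \<in> X" and b: "\<And>y. y \<in> X \<Longrightarrow> ?Q y \<le> ?Q b"
    using continuous_attains_sup[of X ?Q] continuous_on_subset[OF continuous_on_spread] by blast
  \<comment> \<open>Small enough that the spread can never make up for the volume of the simplex \<open>p\<close>.\<close>
  define \<epsilon> where "\<epsilon> = \<bar>vertex_det p\<bar> / (?Q b + 1)"
  have "0 \<le> ?Q b"
    by (rule spread_nonneg)
  then have \<epsilon>: "0 < \<epsilon>" "\<epsilon> * ?Q b < \<bar>vertex_det p\<bar>"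
    using p by (simp_all add: \<epsilon>_def field_simps)
  have "continuous_on X (\<lambda>y. \<bar>vertex_det y\<bar> + \<epsilon> * ?Q y)"
    by (intro continuous_intros continuous_on_subset[OF continuous_on_vertex_det]
        continuous_on_subset[OF continuous_on_spread]) auto
  then obtain x where "x \<in> X" and x: "\<And>y. y \<in> X \<Longrightarrow>
      \<bar>vertex_det y\<bar> + \<epsilon> * ?Q y \<le> \<bar>vertex_det x\<bar> + \<epsilon> * ?Q x"
    using continuous_attains_sup[OF \<open>compact X\<close>] \<open>p \<in> X\<close> by blast
  have "\<epsilon> * ?Q x \<le> \<epsilon> * ?Q b" "0 \<le> \<epsilon> * ?Q p"
    using b[OF \<open>x \<in> X\<close>] \<epsilon>(1) spread_nonneg[of _ p] by simp_all
  then have "\<bar>vertex_det p\<bar> \<le> \<bar>vertex_det x\<bar> + \<epsilon> * ?Q b"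
    using x[OF \<open>p \<in> X\<close>] by linarith
  then have "vertex_det x \<noteq> 0"
    using \<epsilon>(2) by auto
  then show ?thesis
    using that \<epsilon>(1) \<open>x \<in> X\<close> x X by blast
qed

lemma maximal_vertices_first_order:
  fixes x :: "nat \<Rightarrow> 'a::euclidean_space"
  assumes max: "\<And>y. (\<And>i. y i \<in> K) \<Longrightarrow>
       \<bar>vertex_det y\<bar> + \<epsilon> * spread DIM('a) y \<le> \<bar>vertex_det x\<bar> + \<epsilon> * spread DIM('a) x"
    and xK: "\<And>i. x i \<in> K" and "i \<le> DIM('a)" "y \<in> K"
    and W: "\<And>y. vertex_det (x(i := y)) = vertex_det x + W \<bullet> (y - x i)"
  shows "(sgn (vertex_det x) *\<^sub>R W + (2 * \<epsilon>) *\<^sub>R (real (Suc DIM('a)) *\<^sub>R x i - (\<Sum>j\<le>DIM('a). x j)))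
           \<bullet> (y - x i) \<le> - (\<epsilon> * real DIM('a) * (norm (y - x i))\<^sup>2)"
proof -
  let ?\<sigma> = "sgn (vertex_det x)" and ?s = "real (Suc DIM('a)) *\<^sub>R x i - (\<Sum>j\<le>DIM('a). x j)"
  have "?\<sigma> * vertex_det (x(i := y)) \<le> \<bar>vertex_det (x(i := y))\<bar>"
    by (cases "0 :: real" "vertex_det x" rule: linorder_cases) auto
  moreover have "?\<sigma> * vertex_det x = \<bar>vertex_det x\<bar>"
    by (simp add: abs_sgn mult.commute)
  moreover have "\<bar>vertex_det (x(i := y))\<bar> + \<epsilon> * spread DIM('a) (x(i := y))
      \<le> \<bar>vertex_det x\<bar> + \<epsilon> * spread DIM('a) x"
    using max[of "x(i := y)"] xK assms(4) by simp
  ultimately have "?\<sigma> * (W \<bullet> (y - x i)) + \<epsilon> * (2 * (?s \<bullet> (y - x i)) + real DIM('a) * (norm (y - x i))\<^sup>2)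
      \<le> 0"
    unfolding W spread_fun_upd[OF assms(3)] by (simp add: algebra_simps)
  then show ?thesis
    by (simp add: algebra_simps)
qed

lemma exposing_balanced_frame:
  fixes K :: "'a::euclidean_space set"
  assumes "compact K" "aff_dim K = int DIM('a)"
  obtains x m where "inj_on x {..DIM('a)}" "\<And>i. x i \<in> K" "balanced_frame DIM('a) m"
    "\<And>i y. i \<le> DIM('a) \<Longrightarrow> y \<in> K \<Longrightarrow> y \<noteq> x i \<Longrightarrow> y \<bullet> m i < x i \<bullet> m i"
proof -
  let ?n = "DIM('a)"
  obtain \<epsilon> x where \<epsilon>: "0 < \<epsilon>" and xK: "\<And>i. x i \<in> K" and D: "vertex_det x \<noteq> 0"
    and max: "\<And>y. (\<And>i. y i \<in> K) \<Longrightarrow>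
       \<bar>vertex_det y\<bar> + \<epsilon> * spread ?n y \<le> \<bar>vertex_det x\<bar> + \<epsilon> * spread ?n x"
    using exists_maximal_vertices[OF assms] by blast
  let ?\<sigma> = "sgn (vertex_det x)"
  obtain W where
    W: "\<And>i y. i \<le> ?n \<Longrightarrow> vertex_det (x(i := y)) = vertex_det x + W i \<bullet> (y - x i)" and
    W_diff: "\<And>i j. i \<le> ?n \<Longrightarrow> j \<le> ?n \<Longrightarrow> W i \<bullet> (x j - x i) = (if j = i then 0 else - vertex_det x)"
    using vertex_det_gradients by blast
  define m where "m i = ?\<sigma> *\<^sub>R W i + (2 * \<epsilon>) *\<^sub>R (real (Suc ?n) *\<^sub>R x i - (\<Sum>j\<le>?n. x j))" for i
  have "balanced_frame ?n m"
    unfolding m_def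
  proof (rule balanced_frame_perturb)
    show "(?\<sigma> *\<^sub>R W i) \<bullet> (x j - x i) = (if j = i then 0 else - \<bar>vertex_det x\<bar>)"
      if "i \<le> ?n" "j \<le> ?n" for i j
      using W_diff[OF that] by (simp add: abs_sgn mult.commute)
    show "(\<Sum>i\<le>?n. ?\<sigma> *\<^sub>R W i) = 0"
      using sum_vertex_det_gradients[OF D W_diff] by (simp flip: scaleR_sum_right)
  qed (use D \<epsilon> in auto)
  moreover have "y \<bullet> m i < x i \<bullet> m i" if "i \<le> ?n" "y \<in> K" "y \<noteq> x i" for i y
  proof -
    have "m i \<bullet> (y - x i) \<le> - (\<epsilon> * real ?n * (norm (y - x i))\<^sup>2)"
      unfolding m_def using max xK that(1,2) W[OF that(1)] by (rule maximal_vertices_first_order)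
    also have "\<dots> < 0"
      using \<epsilon> that(3) by simp
    finally show ?thesis
      by (simp add: inner_diff_right inner_commute)
  qed
  ultimately show ?thesis
    using that xK inj_on_if_vertex_det_nonzero[OF D] by blast
qed

theorem theorem3p3:
  fixes K :: "'a::euclidean_space set"
  assumes "compact K" and "convex K" and "aff_dim K = int DIM('a)"
  shows "\<exists>(u :: nat \<Rightarrow> 'a) (x :: nat \<Rightarrow> 'a).
           inj_on x {..DIM('a)} \<and>
           (\<forall>i\<le>DIM('a). regular_normal_at K (u i) (x i)) \<and>
           simplex_facet_normals u"
proof -
  obtain x m where inj: "inj_on x {..DIM('a)}" and xK: "\<And>i. x i \<in> K" and m: "balanced_frame DIM('a) m"
    and exposed: "\<And>i y. i \<le> DIM('a) \<Longrightarrow> y \<in> K \<Longrightarrow> y \<noteq> x i \<Longrightarrow> y \<bullet> m i < x i \<bullet> m i"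
    using exposing_balanced_frame[OF assms(1,3)] by blast
  have "regular_normal_at K (m i /\<^sub>R norm (m i)) (x i)" if "i \<le> DIM('a)" for i
    using xK exposed[OF that] balanced_frame_nonzero[OF m DIM_positive that]
    by (rule regular_normal_atI)
  then show ?thesis
    using inj simplex_facet_normals_if_balanced_frame[OF m]
    by (intro exI[of _ "\<lambda>i. m i /\<^sub>R norm (m i)"] exI[of _ x]) simp
qed

end
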